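(* For every triple $(u,\lambda,v)\in\mathbb R^n\times\mathcal Q^*\times\mathbb R^n$ one has $\rho(u,\lambda,v)\ge0$. Moreover, whenever $\rho(u,\lambda,v)$ is finite, the infimum defining $\rho(u,\lambda,v)$ is attained.
   Context: Let $n,m\ge1$, $\mathcal Q:=\{(q_0,q_r)\in\mathbb R\times\mathbb R^m:\|q_r\|\le q_0\}$ and $\mathcal Q^*:=\{(q_0,q_r):\|q_r\|\le-q_0\}$. Let $g=(g_0,g_r):\mathbb R^n\to\mathbb R\times\mathbb R^m$ be $C^2$-smooth around $\bar x$; $\nabla g(\bar x)$ is its Jacobian and $\nabla^2 g(\bar x)(v,u)\in\mathbb R^{1+m}$ is the vector with components $v^T\nabla^2 g_i(\bar x)u$. The infimum function is $$\rho(u,\lambda,v):=\inf_{z\in\mathbb R^n}\Big\{-\lambda_0\Big(\|\nabla g_r(\bar x)z+\nabla^2 g_r(\bar x)(v,u)\|^2-\big(\nabla g_0(\bar x)z+\nabla^2 g_0(\bar x)(v,u)\big)^2\Big)\;\Big|\;\langle\lambda,\nabla g(\bar x)z+\nabla^2 g(\bar x)(v,u)\rangle=0\Big\},$$ with $\rho(u,\lambda,v):=+\infty$ if the constraint set is empty. *)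

theory Defs
  imports "HOL-Analysis.Analysis"
begin

definition C2_around :: "('a::euclidean_space \<Rightarrow> 'b::euclidean_space) \<Rightarrow> 'a \<Rightarrow> bool" where
  "C2_around g xb \<longleftrightarrow> (\<exists>S Dg D2g. open S \<and> xb \<in> S \<and>
      (\<forall>y\<in>S. (g has_derivative blinfun_apply (Dg y)) (at y)) \<and>
      (\<forall>y\<in>S. (Dg has_derivative blinfun_apply (D2g y)) (at y)) \<and>
      continuous_on S (D2g :: 'a \<Rightarrow> 'a \<Rightarrow>\<^sub>L ('a \<Rightarrow>\<^sub>L 'b)))"

definition jac :: "('a::real_normed_vector \<Rightarrow> 'b::real_normed_vector) \<Rightarrow> 'a \<Rightarrow> 'a \<Rightarrow> 'b" where
  "jac g xb z = frechet_derivative g (at xb) z"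

text \<open>Second-order term of g at xb in (v,u): componentwise v^T Hess g_i(xb) u.\<close>
definition hess :: "('a::real_normed_vector \<Rightarrow> 'b::real_normed_vector) \<Rightarrow> 'a \<Rightarrow> 'a \<Rightarrow> 'a \<Rightarrow> 'b" where
  "hess g xb v u = frechet_derivative (\<lambda>y. frechet_derivative g (at y) u) (at xb) v"

definition Qstar :: "(real \<times> (real^'m)) set" where
  "Qstar = {(q0, qr). norm qr \<le> - q0}"

definition rho_obj :: "(real^'n \<Rightarrow> real) \<Rightarrow> (real^'n \<Rightarrow> real^'m) \<Rightarrow> real^'n
     \<Rightarrow> real^'n \<Rightarrow> real \<times> (real^'m) \<Rightarrow> real^'n \<Rightarrow> real^'n \<Rightarrow> real" where
  "rho_obj g0 gr xb u lam v z =
     - fst lam * ((norm (jac gr xb z + hess gr xb v u))\<^sup>2 - (jac g0 xb z + hess g0 xb v u)\<^sup>2)"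

text \<open>The infimum function, extended-real valued; Inf {} = \<infinity>.\<close>
definition rho :: "(real^'n \<Rightarrow> real) \<Rightarrow> (real^'n \<Rightarrow> real^'m) \<Rightarrow> real^'n
     \<Rightarrow> real^'n \<Rightarrow> real \<times> (real^'m) \<Rightarrow> real^'n \<Rightarrow> ereal" where
  "rho g0 gr xb u lam v =
     Inf {ereal (rho_obj g0 gr xb u lam v z) | z.
            fst lam * (jac g0 xb z + hess g0 xb v u) + snd lam \<bullet> (jac gr xb z + hess gr xb v u) = 0}"

end

theory Submission
  imports Defs
begin

text \<open>On the feasible set, \<open>\<lambda>\<^sub>0 y\<^sub>0 + \<lambda>\<^sub>r \<bullet> y\<^sub>r = 0\<close> for \<open>y = \<nabla>g(x)z + \<nabla>\<^sup>2g(x)(v,u)\<close>, so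
if \<open>\<lambda>\<^sub>0 \<noteq> 0\<close> then \<open>y\<^sub>0 = c \<bullet> y\<^sub>r\<close> with \<open>c = -\<lambda>\<^sub>r/\<lambda>\<^sub>0\<close>, and \<open>\<parallel>c\<parallel> \<le> 1\<close> because \<open>\<lambda> \<in> Q\<^sup>*\<close>.
The form \<open>\<parallel>w\<parallel>\<^sup>2 - (c \<bullet> w)\<^sup>2\<close> is then positive semidefinite with a linear square root
\<open>P\<close>, so the objective equals \<open>-\<lambda>\<^sub>0 \<parallel>P y\<^sub>r\<parallel>\<^sup>2\<close>: a nonnegative multiple of the squared
norm of an affine function of \<open>z\<close>, minimised over a hyperplane. The values of that affine
function form a closed affine set, which contains a point of least norm.\<close>

lemma affine_linear_level_set:
  fixes l :: "'a::real_vector \<Rightarrow> real"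
  assumes "linear l"
  shows "affine {z. l z = d}"
  unfolding affine_def by (auto simp: linear_add[OF assms] linear_cmul[OF assms] simp flip: distrib_right)

lemma affine_linear_image:
  fixes F :: "'a::euclidean_space \<Rightarrow> 'b::euclidean_space"
  assumes "linear F" "affine S"
  shows "affine (F ` S)"
  by (metis affine_affine_hull affine_hull_eq affine_hull_linear_image assms linear_conv_bounded_linear)

lemma affine_attains_min_norm:
  fixes S :: "'a::euclidean_space set"
  assumes "affine S" "S \<noteq> {}"
  obtains x where "x \<in> S" "\<And>y. y \<in> S \<Longrightarrow> norm x \<le> norm y"
  using distance_attains_inf[OF affine_closed[OF assms(1)] assms(2), of 0] by auto

lemma norm_affine_map_attains_min_on_level_set:
  fixes F :: "'a::euclidean_space \<Rightarrow> 'b::euclidean_space" and l :: "'a \<Rightarrow> real"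
  assumes "linear F" "linear l" "l z\<^sub>1 = d"
  obtains z\<^sub>0 where "l z\<^sub>0 = d" "\<And>z. l z = d \<Longrightarrow> norm (F z\<^sub>0 + k) \<le> norm (F z + k)"
proof -
  let ?S = "(\<lambda>y. k + y) ` F ` {z. l z = d}"
  have "affine ?S"
    using affine_linear_image[OF assms(1) affine_linear_level_set[OF assms(2)]]
    by (simp add: affine_translation[symmetric])
  moreover have "?S \<noteq> {}" using assms(3) by blast
  ultimately obtain x where "x \<in> ?S" and min: "\<And>y. y \<in> ?S \<Longrightarrow> norm x \<le> norm y"
    using affine_attains_min_norm by blast
  then obtain z\<^sub>0 where "l z\<^sub>0 = d" "x = F z\<^sub>0 + k" by (auto simp: add.commute)
  with min show ?thesis by (intro that) (auto simp: add.commute)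
qed

text \<open>\<open>P w = w - t (c \<bullet> w) c\<close>, where \<open>t\<close> is a root of \<open>t\<^sup>2 \<parallel>c\<parallel>\<^sup>2 - 2t + 1 = 0\<close>.\<close>

lemma linear_sqrt_norm_sq_minus_inner_sq:
  fixes c :: "'a::real_inner"
  assumes "norm c \<le> 1"
  obtains P :: "'a \<Rightarrow> 'a" where "linear P" "\<And>w. (norm w)\<^sup>2 - (c \<bullet> w)\<^sup>2 = (norm (P w))\<^sup>2"
proof -
  define s where "s = (norm c)\<^sup>2"
  define t where "t = (if s = 0 then 0 else (1 - sqrt (1 - s)) / s)"
  define P where "P w = w - (t * (c \<bullet> w)) *\<^sub>R c" for w
  have t_root: "t * t * s - 2 * t = -1" if "s \<noteq> 0"
  proof -
    have "0 < s" "s \<le> 1"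
      using that assms unfolding s_def by (auto simp: power_le_one)
    then have "(sqrt (1 - s))\<^sup>2 = 1 - s" by simp
    then show ?thesis using that
      by (simp add: t_def field_simps power2_eq_square)
  qed
  have "linear P"
    unfolding P_def by (intro linearI) (simp_all add: inner_add_right algebra_simps)
  moreover have "(norm w)\<^sup>2 - (c \<bullet> w)\<^sup>2 = (norm (P w))\<^sup>2" for w
  proof (cases "s = 0")
    case True
    then show ?thesis by (simp add: s_def t_def P_def)
  next
    case False
    have "(norm (P w))\<^sup>2 = (norm w)\<^sup>2 + (c \<bullet> w)\<^sup>2 * (t * t * s - 2 * t)"
      unfolding P_def s_def power2_norm_eq_inner
      by (simp add: inner_diff_left inner_diff_right inner_commute algebra_simps power2_eq_square)
    then show ?thesis using t_root[OF False] by simp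
  qed
  ultimately show ?thesis by (rule that)
qed

lemma dual_cone_form_eq_norm_sq:
  fixes lr :: "'a::real_inner"
  assumes "norm lr \<le> - l0"
  obtains P :: "'a \<Rightarrow> 'a" where "linear P"
    "\<And>y0 yr. l0 * y0 + lr \<bullet> yr = 0 \<Longrightarrow> - l0 * ((norm yr)\<^sup>2 - y0\<^sup>2) = - l0 * (norm (P yr))\<^sup>2"
proof -
  \<comment> \<open>If \<open>l0 = 0\<close> then \<open>lr = 0\<close>; since \<open>inverse 0 = 0\<close>, \<open>c\<close> is then \<open>0\<close>.\<close>
  define c where "c = - (inverse l0 *\<^sub>R lr)"
  have "norm c \<le> 1"
    using assms by (cases "l0 = 0") (simp_all add: c_def field_simps)
  then obtain P :: "'a \<Rightarrow> 'a" where "linear P" and P: "\<And>w. (norm w)\<^sup>2 - (c \<bullet> w)\<^sup>2 = (norm (P w))\<^sup>2"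
    using linear_sqrt_norm_sq_minus_inner_sq by blast
  have "y0 = c \<bullet> yr" if "l0 * y0 + lr \<bullet> yr = 0" "l0 \<noteq> 0" for y0 yr
    using that by (simp add: c_def field_simps)
  with P show ?thesis
    by (intro that[OF \<open>linear P\<close>]) (metis mult_eq_0_iff minus_zero)
qed

lemma Inf_scaled_norm_sq_on_level_set:
  fixes F :: "'a::euclidean_space \<Rightarrow> 'b::euclidean_space" and l :: "'a \<Rightarrow> real"
    and k :: 'b and d :: real
  assumes "linear F" "linear l" "a \<ge> 0"
  defines "I \<equiv> Inf {ereal (a * (norm (F z + k))\<^sup>2) | z. l z = d}"
  shows "I \<ge> 0" and "I \<noteq> \<infinity> \<Longrightarrow> \<exists>z. l z = d \<and> ereal (a * (norm (F z + k))\<^sup>2) = I"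
proof -
  show "I \<ge> 0" unfolding I_def using assms(3) by (auto intro!: Inf_greatest)
  assume "I \<noteq> \<infinity>"
  have "\<exists>z. l z = d"
  proof (rule ccontr)
    assume "\<nexists>z. l z = d"
    then have "I = Inf {}" unfolding I_def by simp
    with \<open>I \<noteq> \<infinity>\<close> show False by (simp add: top_ereal_def)
  qed
  then obtain z\<^sub>1 where "l z\<^sub>1 = d" ..
  then obtain z\<^sub>0 where z\<^sub>0: "l z\<^sub>0 = d" "\<And>z. l z = d \<Longrightarrow> norm (F z\<^sub>0 + k) \<le> norm (F z + k)"
    using norm_affine_map_attains_min_on_level_set[OF assms(1,2)] by blast
  have "ereal (a * (norm (F z\<^sub>0 + k))\<^sup>2) = I"
    unfolding I_def using z\<^sub>0 assms(3)
    by (intro Inf_eqI[symmetric]) (auto intro!: mult_left_mono power_mono)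
  with z\<^sub>0 show "\<exists>z. l z = d \<and> ereal (a * (norm (F z + k))\<^sup>2) = I" by blast
qed

lemma C2_around_linear_jac: "C2_around g xb \<Longrightarrow> linear (jac g xb)"
proof -
  assume "C2_around g xb"
  then obtain Dg where "(g has_derivative blinfun_apply Dg) (at xb)"
    unfolding C2_around_def by blast
  then have "linear (frechet_derivative g (at xb))"
    by (intro linear_frechet_derivative differentiableI)
  moreover have "jac g xb = frechet_derivative g (at xb)"
    by (rule ext) (simp add: jac_def)
  ultimately show ?thesis by simp
qed

theorem lemma4p4:
  fixes g0 :: "real^'n \<Rightarrow> real" and gr :: "real^'n \<Rightarrow> real^'m" and xb :: "real^'n"
  assumes "C2_around g0 xb" and "C2_around gr xb" and "lam \<in> Qstar"
  shows "rho g0 gr xb u lam v \<ge> 0 \<and>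
    (rho g0 gr xb u lam v \<noteq> \<infinity> \<and> rho g0 gr xb u lam v \<noteq> - \<infinity> \<longrightarrow>
      (\<exists>z. fst lam * (jac g0 xb z + hess g0 xb v u) + snd lam \<bullet> (jac gr xb z + hess gr xb v u) = 0 \<and>
           ereal (rho_obj g0 gr xb u lam v z) = rho g0 gr xb u lam v))"
proof -
  obtain l0 lr where lam: "lam = (l0, lr)" by fastforce
  let ?A = "jac g0 xb" and ?B = "jac gr xb" and ?h0 = "hess g0 xb v u" and ?hr = "hess gr xb v u"
  let ?l = "\<lambda>z. l0 * ?A z + lr \<bullet> ?B z" and ?d = "- (l0 * ?h0 + lr \<bullet> ?hr)"
  have "norm lr \<le> - l0" using assms(3) by (simp add: Qstar_def lam)
  then obtain P :: "real^'m \<Rightarrow> real^'m" where "linear P" and P: "\<And>y0 yr. l0 * y0 + lr \<bullet> yr = 0 \<Longrightarrow>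
      - l0 * ((norm yr)\<^sup>2 - y0\<^sup>2) = - l0 * (norm (P yr))\<^sup>2"
    using dual_cone_form_eq_norm_sq[OF \<open>norm lr \<le> - l0\<close>] by metis
  have "linear ?A" and linB: "linear ?B"
    using assms(1,2) by (simp_all add: C2_around_linear_jac)
  then have "linear ?l"
    by (intro linearI) (simp_all add: linear_add linear_cmul inner_add_right algebra_simps)
  let ?F = "P \<circ> ?B" and ?k = "P ?hr"
  have feasible_iff: "l0 * (?A z + ?h0) + lr \<bullet> (?B z + ?hr) = 0 \<longleftrightarrow> ?l z = ?d" for z
    unfolding inner_add_right distrib_left by linarith
  have obj: "rho_obj g0 gr xb u (l0, lr) v z = - l0 * (norm (?F z + ?k))\<^sup>2" if "?l z = ?d" for z
  proof -
    have "l0 * (?A z + ?h0) + lr \<bullet> (?B z + ?hr) = 0" using that feasible_iff by blast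
    from P[OF this] show ?thesis using \<open>linear P\<close> by (simp add: rho_obj_def linear_add)
  qed
  have rho_eq: "rho g0 gr xb u (l0, lr) v = Inf {ereal (- l0 * (norm (?F z + ?k))\<^sup>2) | z. ?l z = ?d}"
    unfolding rho_def fst_conv snd_conv feasible_iff
    by (intro arg_cong[where f = Inf] Collect_cong ex_cong1) (auto simp: obj)
  have "0 \<le> - l0" using \<open>norm lr \<le> - l0\<close> norm_ge_zero[of lr] by linarith
  have rho_nonneg: "rho g0 gr xb u (l0, lr) v \<ge> 0"
    and rho_attained: "rho g0 gr xb u (l0, lr) v \<noteq> \<infinity> \<Longrightarrow>
      \<exists>z. ?l z = ?d \<and> ereal (- l0 * (norm (?F z + ?k))\<^sup>2) = rho g0 gr xb u (l0, lr) v"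
    unfolding rho_eq
    by (rule Inf_scaled_norm_sq_on_level_set[OF linear_compose[OF linB \<open>linear P\<close>] \<open>linear ?l\<close> \<open>0 \<le> - l0\<close>])+
  show ?thesis
    unfolding lam fst_conv snd_conv using rho_nonneg rho_attained by (metis feasible_iff obj)
qed

end
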